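(* Let $N\ge2$, $T>0$, and consider the problem of minimizing $\mathbb V(T)=\frac1N\sum_{i=1}^N\xi_i(T)^2$ over $\alpha\in\mathcal U$, where $\dot\xi_i=-\xi_i+(1-\alpha_i)\bar\xi$, $\bar\xi=\frac1N\sum_j\xi_j$, with initial datum satisfying $\bar\xi(0)>0$ and $\xi_1(0)\ge\dots\ge\xi_N(0)$. Let $\bar\xi_{1,N-1}=\frac1{N-1}\sum_{i=1}^{N-1}\xi_i$ and $$t_N=\frac{N}{N-1}\ln\Big(\frac{(N-1)^2}{N}\,\frac{\bar\xi_{1,N-1}(0)-\xi_N(0)}{\bar\xi(0)}+1\Big).$$ If $T\ge t_N$, then every optimal control of this problem belongs to $\mathcal U_{FS}$, and its trajectory satisfies $\xi_i(T)=\bar\xi(T)$ for every $i\in\{1,\dots,N\}$.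
   Context: $\mathcal U$ is the set of measurable $\alpha:[0,T]\to[0,1]^N$ with $\sum_i\alpha_i(t)\le1$ for all $t$; $\mathcal U_{FS}\subset\mathcal U$ is the subset with $\sum_i\alpha_i(t)=1$ for all $t$. *)

theory Defs
  imports "HOL-Analysis.Analysis"
begin

(* Indices of agents are 1..N. A state is x :: nat => real (only 1..N matter).
   A control is alpha :: real => nat => real (time, index);
   a trajectory is xi :: real => nat => real (time, index). *)

definition xbar :: "nat \<Rightarrow> (nat \<Rightarrow> real) \<Rightarrow> real" where
  "xbar N x = (\<Sum>j=1..N. x j) / real N"

definition admissible :: "nat \<Rightarrow> real \<Rightarrow> (real \<Rightarrow> nat \<Rightarrow> real) \<Rightarrow> bool" where
  "admissible N T \<alpha> \<longleftrightarrow>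
     (\<forall>i\<in>{1..N}. (\<lambda>t. \<alpha> t i) \<in> borel_measurable (lebesgue_on {0..T})) \<and>
     (\<forall>t\<in>{0..T}. (\<forall>i\<in>{1..N}. 0 \<le> \<alpha> t i \<and> \<alpha> t i \<le> 1) \<and> (\<Sum>i=1..N. \<alpha> t i) \<le> 1)"

definition full_strength :: "nat \<Rightarrow> real \<Rightarrow> (real \<Rightarrow> nat \<Rightarrow> real) \<Rightarrow> bool" where
  "full_strength N T \<alpha> \<longleftrightarrow> admissible N T \<alpha> \<and> (\<forall>t\<in>{0..T}. (\<Sum>i=1..N. \<alpha> t i) = 1)"

(* xi is the (Caratheodory) trajectory on [0,T] of
   xi_i' = -xi_i + (1 - alpha_i) xbar(xi), xi(0) = x0, in integral form *)
definition is_traj :: "nat \<Rightarrow> real \<Rightarrow> (real \<Rightarrow> nat \<Rightarrow> real) \<Rightarrow> (nat \<Rightarrow> real)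
                        \<Rightarrow> (real \<Rightarrow> nat \<Rightarrow> real) \<Rightarrow> bool" where
  "is_traj N T \<alpha> x0 \<xi> \<longleftrightarrow>
     (\<forall>i\<in>{1..N}. \<xi> 0 i = x0 i) \<and>
     (\<forall>i\<in>{1..N}. \<forall>t\<in>{0..T}.
        ((\<lambda>s. - \<xi> s i + (1 - \<alpha> s i) * xbar N (\<xi> s)) has_integral (\<xi> t i - \<xi> 0 i)) {0..t})"

definition cost :: "nat \<Rightarrow> real \<Rightarrow> (real \<Rightarrow> nat \<Rightarrow> real) \<Rightarrow> real" where
  "cost N T \<xi> = (\<Sum>i=1..N. (\<xi> T i)\<^sup>2) / real N"

definition optimal_control :: "nat \<Rightarrow> real \<Rightarrow> (nat \<Rightarrow> real) \<Rightarrow> (real \<Rightarrow> nat \<Rightarrow> real) \<Rightarrow> bool" where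
  "optimal_control N T x0 \<alpha> \<longleftrightarrow> admissible N T \<alpha> \<and>
     (\<exists>\<xi>. is_traj N T \<alpha> x0 \<xi>) \<and>
     (\<forall>\<xi> \<beta> \<eta>. is_traj N T \<alpha> x0 \<xi> \<longrightarrow> admissible N T \<beta> \<longrightarrow> is_traj N T \<beta> x0 \<eta>
        \<longrightarrow> cost N T \<xi> \<le> cost N T \<eta>)"

end

theory Submission imports Defs begin

(* The mean m of the state obeys m' = -(S/N) m, where S = \<Sum>i \<alpha>i \<le> 1 is the total strength of
   the control. Hence m(T) \<ge> m(0) e^(-T/N), with equality only if S = 1 almost everywhere. The cost is
   m(T)^2 plus the variance of \<xi>(T), so no control costs less than (m(0) e^(-T/N))^2. This bound is
   attained by a constant full-strength control that brings all agents to the common value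
   m(0) e^(-T/N) at time T; its weights are nonnegative precisely when T \<ge> t_N. An optimal control
   must therefore attain the bound, which forces S = 1 almost everywhere and zero variance at T. *)

lemma has_integral_increment:
  fixes f F :: "real \<Rightarrow> 'a::banach"
  assumes F: "\<And>t. t \<in> {a..b} \<Longrightarrow> (f has_integral (F t - F a)) {a..t}"
    and st: "a \<le> s" "s \<le> t" "t \<le> b"
  shows "(f has_integral (F t - F s)) {s..t}"
proof -
  have "f integrable_on {s..t}"
    by (rule integrable_subinterval_real[OF has_integral_integrable[OF F[of b]]]) (use st in auto)
  then obtain J where J: "(f has_integral J) {s..t}" by blast
  have "(f has_integral ((F s - F a) + J)) {a..t}"
    by (rule has_integral_combine[OF st(1,2) F J]) (use st in auto)
  moreover have "(f has_integral (F t - F a)) {a..t}" using F st by auto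
  ultimately have "(F s - F a) + J = F t - F a" using has_integral_unique by blast
  then have "J = F t - F s" by (simp add: algebra_simps)
  with J show ?thesis by simp
qed

lemma continuous_on_if_has_integral_increments:
  fixes f F :: "real \<Rightarrow> 'a::banach"
  assumes F: "\<And>t. t \<in> {a..b} \<Longrightarrow> (f has_integral (F t - F a)) {a..t}"
  shows "continuous_on {a..b} F"
proof (cases "a \<le> b")
  case True
  have "continuous_on {a..b} (\<lambda>t. F a + integral {a..t} f)"
    by (intro continuous_intros indefinite_integral_continuous_1 has_integral_integrable[OF F])
       (use True in auto)
  moreover have "F a + integral {a..t} f = F t" if "t \<in> {a..b}" for t
    using F[OF that] by (simp add: integral_unique)
  ultimately show ?thesis using continuous_on_eq by blast
qed simp

lemma nonneg_if_has_integral_nonneg_where_nonpos: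
  fixes r g :: "real \<Rightarrow> real"
  assumes incr: "\<And>s t. a \<le> s \<Longrightarrow> s \<le> t \<Longrightarrow> t \<le> b \<Longrightarrow> (g has_integral (r t - r s)) {s..t}"
    and ra: "0 \<le> r a"
    and g: "\<And>\<tau>. \<tau> \<in> {a..b} \<Longrightarrow> r \<tau> \<le> 0 \<Longrightarrow> 0 \<le> g \<tau>"
    and t: "t \<in> {a..b}"
  shows "0 \<le> r t"
proof (rule ccontr)
  assume neg: "\<not> 0 \<le> r t"
  have at: "a \<le> t" "t \<le> b" using t by auto
  have cont: "continuous_on {a..t} r"
    by (rule continuous_on_if_has_integral_increments[where f=g]) (use incr at in auto)
  have IVT_zero: "\<exists>x\<in>{u..t}. r x = 0" if "a \<le> u" "u \<le> t" "0 \<le> r u" for u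
  proof -
    have "continuous_on {u..t} r" by (rule continuous_on_subset[OF cont]) (use that in auto)
    then have "\<exists>x. u \<le> x \<and> x \<le> t \<and> - r x = 0"
      by (intro IVT') (use that neg in \<open>auto intro: continuous_intros\<close>)
    then show ?thesis by auto
  qed
  \<comment> \<open>On the last zero s of r before t, r stays nonpositive on [s, t], so it cannot decrease there.\<close>
  define Z where "Z = {a..t} \<inter> r -` {0}"
  have "Z \<noteq> {}" using IVT_zero[of a] ra at unfolding Z_def by auto
  moreover have "closed Z" unfolding Z_def by (rule continuous_closed_preimage[OF cont]) auto
  moreover have bdd: "bdd_above Z" unfolding Z_def by (rule bdd_aboveI[of _ t]) auto
  ultimately have "Sup Z \<in> Z" using closed_contains_Sup by blast
  then obtain s where s: "a \<le> s" "s \<le> t" "r s = 0" and s_max: "\<And>x. x \<in> Z \<Longrightarrow> x \<le> s"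
    using cSup_upper[OF _ bdd] unfolding Z_def by auto
  have "r \<tau> \<le> 0" if "\<tau> \<in> {s..t}" for \<tau>
  proof (rule ccontr)
    assume "\<not> r \<tau> \<le> 0"
    moreover have "a \<le> \<tau>" "\<tau> \<le> t" using that s by auto
    ultimately obtain x where x: "x \<in> {\<tau>..t}" "r x = 0" using IVT_zero[of \<tau>] by auto
    then have "x \<le> s" using s_max that s unfolding Z_def by auto
    with x that have "\<tau> = s" by auto
    with s \<open>\<not> r \<tau> \<le> 0\<close> show False by simp
  qed
  then have "0 \<le> r t - r s"
    by (intro has_integral_nonneg[OF incr[OF s(1,2) at(2)]] g) (use s at in auto)
  with s neg show False by simp
qed

lemma AE_zero_if_nonneg_has_integral_0:
  fixes f :: "'a::euclidean_space \<Rightarrow> real"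
  assumes S: "S \<in> sets lebesgue" and f: "(f has_integral 0) S"
    and nonneg: "\<And>x. x \<in> S \<Longrightarrow> 0 \<le> f x"
  shows "AE x in lebesgue_on S. f x = 0"
proof -
  have af: "f absolutely_integrable_on S"
    using nonneg has_integral_integrable[OF f]
    by (intro absolutely_integrable_onI) (auto intro: integrable_eq[OF has_integral_integrable[OF f]])
  have "set_lebesgue_integral lebesgue S f = 0"
    using set_lebesgue_integral_eq_integral(2)[OF af] f by (simp add: integral_unique)
  then have "AE x in lebesgue. indicator S x *\<^sub>R f x = 0"
    unfolding set_lebesgue_integral_def
    by (subst (asm) integral_nonneg_eq_0_iff_AE)
       (use af nonneg in \<open>auto simp: set_integrable_def indicator_def\<close>)
  then have "AE x in lebesgue. x \<in> S \<longrightarrow> f x = 0"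
    by (rule AE_mp) (auto intro!: AE_I2)
  then show ?thesis by (subst AE_restrict_space_iff) (use S in auto)
qed

lemma has_integral_exp_decay:
  fixes n c a s t :: real
  assumes "s \<le> t" "n \<noteq> 0"
  shows "((\<lambda>\<tau>. - c / n * exp (- (\<tau> - a) / n)) has_integral
          (c * exp (- (t - a) / n) - c * exp (- (s - a) / n))) {s..t}"
proof (rule fundamental_theorem_of_calculus[OF assms(1)])
  fix x assume "x \<in> {s..t}"
  show "((\<lambda>\<tau>. c * exp (- (\<tau> - a) / n)) has_vector_derivative - c / n * exp (- (x - a) / n))
          (at x within {s..t})"
    unfolding has_real_derivative_iff_has_vector_derivative[symmetric]
    using assms by (auto intro!: derivative_eq_intros simp: field_simps)
qed

locale mean_decay =
  fixes n T m0 :: real and S m :: "real \<Rightarrow> real"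
  assumes n_pos: "0 < n" and m0_pos: "0 < m0"
    and S_bounds: "\<And>\<tau>. \<tau> \<in> {0..T} \<Longrightarrow> 0 \<le> S \<tau> \<and> S \<tau> \<le> 1"
    and m_0: "m 0 = m0"
    and m_has_integral:
      "\<And>t. t \<in> {0..T} \<Longrightarrow> ((\<lambda>\<tau>. - S \<tau> / n * m \<tau>) has_integral (m t - m 0)) {0..t}"
begin

definition gap :: "real \<Rightarrow> real" where
  "gap t = m t - m0 * exp (- t / n)"

lemma gap_has_integral:
  assumes st: "0 \<le> s" "s \<le> t" "t \<le> T"
  shows "((\<lambda>\<tau>. (1 - S \<tau>) * m0 * exp (- \<tau> / n) / n - S \<tau> / n * gap \<tau>) has_integral (gap t - gap s)) {s..t}"
proof -
  have "((\<lambda>\<tau>. - S \<tau> / n * m \<tau> - (- m0 / n * exp (- (\<tau> - 0) / n))) has_integral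
          ((m t - m s) - (m0 * exp (- (t - 0) / n) - m0 * exp (- (s - 0) / n)))) {s..t}"
    by (intro has_integral_diff has_integral_increment[where F = m, OF m_has_integral]
        has_integral_exp_decay) (use st n_pos in auto)
  moreover have "(m t - m s) - (m0 * exp (- (t - 0) / n) - m0 * exp (- (s - 0) / n)) = gap t - gap s"
    unfolding gap_def by simp
  moreover have "- S \<tau> / n * m \<tau> - (- m0 / n * exp (- (\<tau> - 0) / n))
      = (1 - S \<tau>) * m0 * exp (- \<tau> / n) / n - S \<tau> / n * gap \<tau>" for \<tau>
    unfolding gap_def by (simp add: diff_divide_distrib add_divide_distrib ring_distribs)
  ultimately show ?thesis by simp
qed

lemma gap_nonneg:
  assumes "t \<in> {0..T}"
  shows "0 \<le> gap t"
proof (rule nonneg_if_has_integral_nonneg_where_nonpos[OF gap_has_integral _ _ assms])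
  show "0 \<le> gap 0" unfolding gap_def using m_0 by simp
  fix \<tau> assume "\<tau> \<in> {0..T}" and "gap \<tau> \<le> 0"
  with S_bounds[of \<tau>] m0_pos n_pos
  have "0 \<le> (1 - S \<tau>) * m0 * exp (- \<tau> / n)" "S \<tau> * gap \<tau> \<le> 0"
    by (simp_all add: mult_nonneg_nonpos)
  moreover have "(1 - S \<tau>) * m0 * exp (- \<tau> / n) / n - S \<tau> / n * gap \<tau>
      = ((1 - S \<tau>) * m0 * exp (- \<tau> / n) - S \<tau> * gap \<tau>) / n"
    by (simp add: diff_divide_distrib)
  ultimately show "0 \<le> (1 - S \<tau>) * m0 * exp (- \<tau> / n) / n - S \<tau> / n * gap \<tau>"
    using n_pos by simp
qed

lemma m_ge_exp_decay:
  assumes "t \<in> {0..T}"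
  shows "m0 * exp (- t / n) \<le> m t"
  using gap_nonneg[OF assms] unfolding gap_def by simp

lemma gap_ge_exp_decay:
  assumes a: "a \<in> {0..T}" and t: "t \<in> {a..T}"
  shows "gap a * exp (- (t - a) / n) \<le> gap t"
proof -
  define r where "r \<tau> = gap \<tau> - gap a * exp (- (\<tau> - a) / n)" for \<tau>
  define g where "g \<tau> = ((1 - S \<tau>) * m0 * exp (- \<tau> / n) / n - S \<tau> / n * gap \<tau>)
                        - (- gap a / n * exp (- (\<tau> - a) / n))" for \<tau>
  have "0 \<le> r t"
  proof (rule nonneg_if_has_integral_nonneg_where_nonpos[OF _ _ _ t])
    fix s t' assume "a \<le> s" "s \<le> t'" "t' \<le> T"
    then have "(g has_integral ((gap t' - gap s)
        - (gap a * exp (- (t' - a) / n) - gap a * exp (- (s - a) / n)))) {s..t'}"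
      unfolding g_def using a n_pos by (intro has_integral_diff gap_has_integral has_integral_exp_decay) auto
    then show "(g has_integral (r t' - r s)) {s..t'}" unfolding r_def by (simp add: algebra_simps)
  next
    show "0 \<le> r a" unfolding r_def by simp
  next
    fix \<tau> assume \<tau>: "\<tau> \<in> {a..T}" and "r \<tau> \<le> 0"
    then have \<tau>T: "\<tau> \<in> {0..T}" using a by auto
    have g_eq: "g \<tau> = ((1 - S \<tau>) * m0 * exp (- \<tau> / n) + (1 - S \<tau>) * gap \<tau> - r \<tau>) / n"
      unfolding g_def r_def using n_pos by (simp add: field_simps)
    \<comment> \<open>This is where S \<le> 1 and the nonnegativity of the gap enter.\<close>
    have "0 \<le> (1 - S \<tau>) * m0 * exp (- \<tau> / n)" "0 \<le> (1 - S \<tau>) * gap \<tau>"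
      using S_bounds[OF \<tau>T] gap_nonneg[OF \<tau>T] m0_pos by simp_all
    with \<open>r \<tau> \<le> 0\<close> n_pos show "0 \<le> g \<tau>" unfolding g_eq by simp
  qed
  then show ?thesis unfolding r_def by simp
qed

lemma gap_eq_0_if_gap_end_eq_0:
  assumes "gap T = 0" and a: "a \<in> {0..T}"
  shows "gap a = 0"
proof -
  have "gap a * exp (- (T - a) / n) \<le> 0" using gap_ge_exp_decay[OF a, of T] a assms(1) by auto
  then have "gap a \<le> 0" by (simp add: mult_le_0_iff)
  with gap_nonneg[OF a] show ?thesis by simp
qed

lemma AE_S_eq_1_if_m_end_eq_exp_decay:
  assumes T: "0 \<le> T" and eq: "m T = m0 * exp (- T / n)"
  shows "AE \<tau> in lebesgue_on {0..T}. S \<tau> = 1"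
proof -
  have gap_0: "gap \<tau> = 0" if "\<tau> \<in> {0..T}" for \<tau>
    by (rule gap_eq_0_if_gap_end_eq_0) (use eq that in \<open>simp_all add: gap_def\<close>)
  have "((\<lambda>\<tau>. (1 - S \<tau>) * m0 * exp (- \<tau> / n) / n - S \<tau> / n * gap \<tau>) has_integral 0) {0..T}"
    using gap_has_integral[of 0 T] gap_0 T by simp
  then have "((\<lambda>\<tau>. (1 - S \<tau>) * m0 * exp (- \<tau> / n) / n) has_integral 0) {0..T}"
    by (rule has_integral_eq[rotated]) (simp add: gap_0)
  then have "AE \<tau> in lebesgue_on {0..T}. (1 - S \<tau>) * m0 * exp (- \<tau> / n) / n = 0"
    by (rule AE_zero_if_nonneg_has_integral_0[rotated]) (use S_bounds m0_pos n_pos in auto)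
  then show ?thesis
    by (rule AE_mp) (use m0_pos n_pos in \<open>auto intro!: AE_I2\<close>)
qed

end

lemma xbar_has_integral:
  assumes N: "0 < N" and tr: "is_traj N T \<alpha> x0 \<xi>" and t: "t \<in> {0..T}"
  shows "((\<lambda>\<tau>. - (\<Sum>i=1..N. \<alpha> \<tau> i) / real N * xbar N (\<xi> \<tau>)) has_integral
           (xbar N (\<xi> t) - xbar N (\<xi> 0))) {0..t}"
proof -
  have "((\<lambda>\<tau>. \<Sum>i=1..N. - \<xi> \<tau> i + (1 - \<alpha> \<tau> i) * xbar N (\<xi> \<tau>)) has_integral
          (\<Sum>i=1..N. \<xi> t i - \<xi> 0 i)) {0..t}"
    using tr t unfolding is_traj_def by (intro has_integral_sum) auto
  then have "((\<lambda>\<tau>. (\<Sum>i=1..N. - \<xi> \<tau> i + (1 - \<alpha> \<tau> i) * xbar N (\<xi> \<tau>)) / real N) has_integral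
          ((\<Sum>i=1..N. \<xi> t i - \<xi> 0 i) / real N)) {0..t}"
    by (rule has_integral_divide)
  moreover have "(\<Sum>i=1..N. \<xi> t i - \<xi> 0 i) / real N = xbar N (\<xi> t) - xbar N (\<xi> 0)"
    unfolding xbar_def by (simp add: sum_subtractf diff_divide_distrib)
  moreover have "(\<Sum>i=1..N. - \<xi> \<tau> i + (1 - \<alpha> \<tau> i) * xbar N (\<xi> \<tau>)) / real N
      = - (\<Sum>i=1..N. \<alpha> \<tau> i) / real N * xbar N (\<xi> \<tau>)" for \<tau>
  proof -
    have "(\<Sum>i=1..N. - \<xi> \<tau> i + (1 - \<alpha> \<tau> i) * xbar N (\<xi> \<tau>))
        = real N * xbar N (\<xi> \<tau>) - (\<Sum>i=1..N. \<xi> \<tau> i) - (\<Sum>i=1..N. \<alpha> \<tau> i) * xbar N (\<xi> \<tau>)"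
      by (simp add: sum.distrib sum_subtractf sum_negf sum_distrib_left sum_distrib_right algebra_simps)
    also have "(\<Sum>i=1..N. \<xi> \<tau> i) = real N * xbar N (\<xi> \<tau>)" unfolding xbar_def using N by simp
    finally show ?thesis using N by (simp add: field_simps)
  qed
  ultimately show ?thesis by simp
qed

lemma mean_decay_of_traj:
  assumes N: "0 < N" and adm: "admissible N T \<alpha>" and tr: "is_traj N T \<alpha> x0 \<xi>"
    and pos: "0 < xbar N x0"
  shows "mean_decay (real N) T (xbar N x0) (\<lambda>\<tau>. \<Sum>i=1..N. \<alpha> \<tau> i) (\<lambda>\<tau>. xbar N (\<xi> \<tau>))"
proof
  show "0 \<le> (\<Sum>i=1..N. \<alpha> \<tau> i) \<and> (\<Sum>i=1..N. \<alpha> \<tau> i) \<le> 1" if "\<tau> \<in> {0..T}" for \<tau>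
    using adm that unfolding admissible_def by (auto intro: sum_nonneg)
  have "(\<Sum>i=1..N. \<xi> 0 i) = (\<Sum>i=1..N. x0 i)"
    using tr unfolding is_traj_def by (intro sum.cong) auto
  then show "xbar N (\<xi> 0) = xbar N x0" unfolding xbar_def by simp
qed (use N pos xbar_has_integral[OF N tr] in auto)

lemma cost_eq_xbar_sq_plus_variance:
  assumes N: "0 < N"
  shows "cost N T \<xi> = (xbar N (\<xi> T))\<^sup>2 + (\<Sum>i=1..N. (\<xi> T i - xbar N (\<xi> T))\<^sup>2) / real N"
proof -
  define m where "m = xbar N (\<xi> T)"
  have sum_eq: "(\<Sum>i=1..N. \<xi> T i) = real N * m" unfolding m_def xbar_def using N by simp
  have "(\<Sum>i=1..N. (\<xi> T i - m)\<^sup>2) = (\<Sum>i=1..N. (\<xi> T i)\<^sup>2) - 2 * m * (\<Sum>i=1..N. \<xi> T i) + real N * m\<^sup>2"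
    by (simp add: power2_diff sum.distrib sum_subtractf sum_distrib_left mult.commute mult.left_commute)
  also have "\<dots> = (\<Sum>i=1..N. (\<xi> T i)\<^sup>2) - real N * m\<^sup>2" unfolding sum_eq by (simp add: power2_eq_square)
  finally show ?thesis unfolding cost_def m_def[symmetric] using N by (simp add: field_simps)
qed

lemma xbar_sq_le_cost:
  assumes "0 < N"
  shows "(xbar N (\<xi> T))\<^sup>2 \<le> cost N T \<xi>"
  unfolding cost_eq_xbar_sq_plus_variance[OF assms] by (simp add: sum_nonneg)

lemma consensus_if_cost_le_xbar_sq:
  assumes N: "0 < N" and le: "cost N T \<xi> \<le> (xbar N (\<xi> T))\<^sup>2" and i: "i \<in> {1..N}"
  shows "\<xi> T i = xbar N (\<xi> T)"
proof -
  have "(\<Sum>j=1..N. (\<xi> T j - xbar N (\<xi> T))\<^sup>2) \<le> 0"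
    using le N unfolding cost_eq_xbar_sq_plus_variance[OF N] by (simp add: divide_le_0_iff)
  then have "(\<Sum>j=1..N. (\<xi> T j - xbar N (\<xi> T))\<^sup>2) = 0" by (intro antisym) (simp_all add: sum_nonneg)
  then have "\<forall>j\<in>{1..N}. (\<xi> T j - xbar N (\<xi> T))\<^sup>2 = 0" by (simp add: sum_nonneg_eq_0_iff)
  with i show ?thesis by simp
qed

lemma is_traj_constant_control:
  fixes c x0 :: "nat \<Rightarrow> real"
  assumes N: "2 \<le> N" and c_sum: "(\<Sum>i=1..N. c i) = 1"
  shows "is_traj N T (\<lambda>_ i. c i) x0 (\<lambda>t i. exp (- t) * x0 i
           + (1 - c i) * (real N / (real N - 1)) * xbar N x0 * (exp (- t / real N) - exp (- t)))"
proof -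
  define n where "n = real N"
  define M where "M = xbar N x0"
  define \<eta> where "\<eta> t i = exp (- t) * x0 i + (1 - c i) * (n / (n - 1)) * M * (exp (- t / n) - exp (- t))"
    for t i
  have n: "1 < n" using N unfolding n_def by simp
  have xbar_\<eta>: "xbar N (\<eta> t) = M * exp (- t / n)" for t
  proof -
    have "(\<Sum>i=1..N. \<eta> t i) = exp (- t) * (\<Sum>i=1..N. x0 i)
        + (\<Sum>i=1..N. 1 - c i) * (n / (n - 1) * M * (exp (- t / n) - exp (- t)))"
      unfolding \<eta>_def
      by (simp add: sum.distrib sum_distrib_left sum_distrib_right sum_divide_distrib mult.assoc)
    also have "(\<Sum>i=1..N. x0 i) = n * M" unfolding n_def M_def xbar_def using N by simp
    also have "(\<Sum>i=1..N. 1 - c i) = n - 1" using c_sum unfolding n_def by (simp add: sum_subtractf)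
    also have "exp (- t) * (n * M) + (n - 1) * (n / (n - 1) * M * (exp (- t / n) - exp (- t)))
        = n * (M * exp (- t / n))"
      using n by (simp add: field_simps)
    finally have "(\<Sum>i=1..N. \<eta> t i) = n * (M * exp (- t / n))" .
    then show ?thesis unfolding xbar_def n_def using n n_def by simp
  qed
  have "((\<lambda>s. \<eta> s i) has_real_derivative - \<eta> s i + (1 - c i) * xbar N (\<eta> s)) (at s)" for i s
    unfolding xbar_\<eta> \<eta>_def
    by (rule derivative_eq_intros refl | use n in \<open>simp add: field_simps\<close>)+
  then have "((\<lambda>s. - \<eta> s i + (1 - c i) * xbar N (\<eta> s)) has_integral (\<eta> t i - \<eta> 0 i)) {0..t}"
    if "0 \<le> t" for i t
    using that by (intro fundamental_theorem_of_calculus)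
      (auto simp: has_real_derivative_iff_has_vector_derivative[symmetric] intro: has_field_derivative_at_within)
  then have "is_traj N T (\<lambda>_ i. c i) x0 \<eta>" unfolding is_traj_def by (auto simp: \<eta>_def)
  then show ?thesis unfolding \<eta>_def n_def M_def .
qed

lemma consensus_weights:
  fixes N :: nat and T :: real and x0 :: "nat \<Rightarrow> real"
  assumes N: "2 \<le> N" and T: "0 < T" and pos: "0 < xbar N x0"
    and ord: "\<And>i j. 1 \<le> i \<Longrightarrow> i \<le> j \<Longrightarrow> j \<le> N \<Longrightarrow> x0 j \<le> x0 i"
    and thr: "T \<ge> real N / (real N - 1) *
           ln ((real N - 1)\<^sup>2 / real N *
               (((\<Sum>i=1..N-1. x0 i) / (real N - 1) - x0 N) / xbar N x0) + 1)"
  obtains c where "\<And>i. i \<in> {1..N} \<Longrightarrow> 0 \<le> c i" and "(\<Sum>i=1..N. c i) = 1"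
    and "\<And>i. i \<in> {1..N} \<Longrightarrow> exp (- T) * x0 i
           + (1 - c i) * (real N / (real N - 1)) * xbar N x0 * (exp (- T / real N) - exp (- T))
         = xbar N x0 * exp (- T / real N)"
proof -
  define n where "n = real N"
  define M where "M = xbar N x0"
  have n: "1 < n" using N unfolding n_def by simp
  have M: "0 < M" using pos unfolding M_def .
  have sum_x0: "(\<Sum>i=1..N. x0 i) = n * M" unfolding M_def xbar_def n_def using N by simp
  have "{1..N} = insert N {1..N-1}" using N by auto
  then have sum_x0_init: "(\<Sum>i=1..N-1. x0 i) = n * M - x0 N" using sum_x0 N by simp
  have x0_ge_last: "x0 N \<le> x0 i" if "i \<in> {1..N}" for i using ord[of i N] that by auto
  have "n * x0 N \<le> n * M"
    using sum_mono[of "{1..N}" "\<lambda>_. x0 N" x0] x0_ge_last sum_x0 unfolding n_def by simp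
  then have last_le_M: "x0 N \<le> M" using n by simp
  define L where "L = (n - 1) * (M - x0 N) / M + 1"
  define E where "E = exp (T * (n - 1) / n)"
  have "(n - 1)\<^sup>2 / n * (((\<Sum>i=1..N-1. x0 i) / (n - 1) - x0 N) / M) + 1 = L"
    unfolding L_def sum_x0_init using n M by (simp add: field_simps power2_eq_square)
  then have "n / (n - 1) * ln L \<le> T" using thr unfolding n_def[symmetric] M_def[symmetric] by simp
  then have "ln L \<le> T * (n - 1) / n" using n by (simp add: field_simps)
  moreover have "0 < L" unfolding L_def using n M last_le_M by (simp add: add_nonneg_pos)
  ultimately have E_ge_L: "L \<le> E" unfolding E_def by (metis exp_le_cancel_iff exp_ln)
  define W where "W = n / (n - 1) * M * (E - 1)"
  have "1 < E" unfolding E_def using n T by simp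
  then have W: "0 < W" unfolding W_def using n M by simp
  have "(n - 1) * (M - x0 N) \<le> M * (E - 1)"
    using E_ge_L M unfolding L_def by (simp add: field_simps)
  moreover have "W / n = M * (E - 1) / (n - 1)"
    unfolding W_def using n by (simp add: field_simps)
  \<comment> \<open>The weight of the smallest agent is nonnegative exactly when T is at least the threshold.\<close>
  ultimately have W_big: "M - x0 N \<le> W / n"
    using n by (simp add: pos_le_divide_eq mult.commute)
  define c where "c i = (x0 i - M + W / n) / W" for i
  show thesis
  proof
    show "0 \<le> c i" if "i \<in> {1..N}" for i
      unfolding c_def using x0_ge_last[OF that] W_big W by simp
    have "(\<Sum>i=1..N. x0 i - M + W / n) = W"
      using sum_x0 n unfolding n_def by (simp add: sum.distrib sum_subtractf)
    then show "(\<Sum>i=1..N. c i) = 1" unfolding c_def using W by (simp add: sum_divide_distrib[symmetric])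
    fix i
    have exp_T: "exp (- T) * E = exp (- T / n)"
      unfolding E_def using n by (simp add: exp_add[symmetric] field_simps)
    have "(1 - c i) * W = W - W / n + M - x0 i" unfolding c_def using W by (simp add: field_simps)
    moreover have "W - W / n = W * ((n - 1) / n)" using n by (simp add: field_simps)
    moreover have "\<dots> = M * (E - 1)" unfolding W_def using n by simp
    ultimately have weight: "(1 - c i) * W = M * E - x0 i" by (simp add: algebra_simps)
    have "exp (- T) * x0 i + (1 - c i) * (n / (n - 1)) * M * (exp (- T / n) - exp (- T))
        = exp (- T) * x0 i + (1 - c i) * (n / (n - 1) * M * (exp (- T) * E - exp (- T)))"
      by (simp add: exp_T mult.assoc)
    also have "\<dots> = exp (- T) * (x0 i + (1 - c i) * W)"
      unfolding W_def using n by (simp add: field_simps)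
    also have "\<dots> = M * exp (- T / n)"
      unfolding weight exp_T[symmetric] by (simp add: algebra_simps)
    finally show "exp (- T) * x0 i + (1 - c i) * (real N / (real N - 1)) * xbar N x0
        * (exp (- T / real N) - exp (- T)) = xbar N x0 * exp (- T / real N)"
      unfolding n_def M_def .
  qed
qed

lemma consensus_reachable:
  fixes N :: nat and T :: real and x0 :: "nat \<Rightarrow> real"
  assumes N: "2 \<le> N" and "0 < T" and "0 < xbar N x0"
    and "\<And>i j. 1 \<le> i \<Longrightarrow> i \<le> j \<Longrightarrow> j \<le> N \<Longrightarrow> x0 j \<le> x0 i"
    and "T \<ge> real N / (real N - 1) *
           ln ((real N - 1)\<^sup>2 / real N *
               (((\<Sum>i=1..N-1. x0 i) / (real N - 1) - x0 N) / xbar N x0) + 1)"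
  obtains \<beta> \<eta> where "admissible N T \<beta>" and "is_traj N T \<beta> x0 \<eta>"
    and "cost N T \<eta> = (xbar N x0 * exp (- T / real N))\<^sup>2"
proof -
  obtain c where c_nonneg: "\<And>i. i \<in> {1..N} \<Longrightarrow> 0 \<le> c i" and c_sum: "(\<Sum>i=1..N. c i) = 1"
    and consensus: "\<And>i. i \<in> {1..N} \<Longrightarrow> exp (- T) * x0 i
           + (1 - c i) * (real N / (real N - 1)) * xbar N x0 * (exp (- T / real N) - exp (- T))
         = xbar N x0 * exp (- T / real N)"
    using consensus_weights[OF assms] by blast
  define \<eta> where "\<eta> t i = exp (- t) * x0 i
      + (1 - c i) * (real N / (real N - 1)) * xbar N x0 * (exp (- t / real N) - exp (- t))" for t i
  have "c i \<le> 1" if "i \<in> {1..N}" for i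
    using member_le_sum[of i "{1..N}" c] that c_nonneg c_sum by simp
  then have "admissible N T (\<lambda>_ i. c i)"
    unfolding admissible_def using c_nonneg c_sum by auto
  moreover have "is_traj N T (\<lambda>_ i. c i) x0 \<eta>"
    unfolding \<eta>_def by (rule is_traj_constant_control[OF N c_sum])
  moreover have "cost N T \<eta> = (xbar N x0 * exp (- T / real N))\<^sup>2"
  proof -
    have "\<eta> T i = xbar N x0 * exp (- T / real N)" if "i \<in> {1..N}" for i
      unfolding \<eta>_def by (rule consensus[OF that])
    then have "(\<Sum>i=1..N. (\<eta> T i)\<^sup>2) = (\<Sum>i=1..N. (xbar N x0 * exp (- T / real N))\<^sup>2)"
      by (intro sum.cong) simp_all
    then show ?thesis unfolding cost_def using N by simp
  qed
  ultimately show thesis by (rule that)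
qed

lemma full_strength_and_consensus_if_cost_le_exp_decay:
  assumes N: "0 < N" and T: "0 \<le> T" and adm: "admissible N T \<alpha>" and tr: "is_traj N T \<alpha> x0 \<xi>"
    and pos: "0 < xbar N x0" and le: "cost N T \<xi> \<le> (xbar N x0 * exp (- T / real N))\<^sup>2"
  shows "(AE t in lebesgue_on {0..T}. (\<Sum>i=1..N. \<alpha> t i) = 1) \<and>
      (\<forall>i\<in>{1..N}. \<xi> T i = xbar N (\<xi> T))"
proof -
  interpret mean_decay "real N" T "xbar N x0" "\<lambda>\<tau>. \<Sum>i=1..N. \<alpha> \<tau> i" "\<lambda>\<tau>. xbar N (\<xi> \<tau>)"
    by (rule mean_decay_of_traj[OF N adm tr pos])
  define e where "e = xbar N x0 * exp (- T / real N)"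
  have "e \<le> xbar N (\<xi> T)" using m_ge_exp_decay[of T] T unfolding e_def by simp
  moreover have "(xbar N (\<xi> T))\<^sup>2 \<le> e\<^sup>2"
    using xbar_sq_le_cost[OF N, of \<xi> T] le unfolding e_def by (rule order_trans)
  then have "xbar N (\<xi> T) \<le> e" by (rule power2_le_imp_le) (use pos in \<open>simp add: e_def\<close>)
  ultimately have mean_T: "xbar N (\<xi> T) = e" by simp
  then have "AE t in lebesgue_on {0..T}. (\<Sum>i=1..N. \<alpha> t i) = 1"
    using T unfolding e_def by (intro AE_S_eq_1_if_m_end_eq_exp_decay) simp_all
  moreover have "\<xi> T i = xbar N (\<xi> T)" if "i \<in> {1..N}" for i
    using le mean_T unfolding e_def by (intro consensus_if_cost_le_xbar_sq[OF N _ that]) simp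
  ultimately show ?thesis by blast
qed

theorem theorem6:
  fixes N :: nat and T :: real and x0 :: "nat \<Rightarrow> real" and \<alpha> :: "real \<Rightarrow> nat \<Rightarrow> real"
  assumes "N \<ge> 2" and "T > 0"
    and "xbar N x0 > 0"
    and "\<And>i j. 1 \<le> i \<Longrightarrow> i \<le> j \<Longrightarrow> j \<le> N \<Longrightarrow> x0 j \<le> x0 i"
    and "T \<ge> real N / (real N - 1) *
           ln ((real N - 1)\<^sup>2 / real N *
               (((\<Sum>i=1..N-1. x0 i) / (real N - 1) - x0 N) / xbar N x0) + 1)"
    and "optimal_control N T x0 \<alpha>"
  shows "(AE t in lebesgue_on {0..T}. (\<Sum>i=1..N. \<alpha> t i) = 1) \<and>
         (\<forall>\<xi>. is_traj N T \<alpha> x0 \<xi> \<longrightarrow> (\<forall>i\<in>{1..N}. \<xi> T i = xbar N (\<xi> T)))"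
proof -
  obtain \<beta> \<eta> where \<beta>: "admissible N T \<beta>" and \<eta>: "is_traj N T \<beta> x0 \<eta>"
    and cost_\<eta>: "cost N T \<eta> = (xbar N x0 * exp (- T / real N))\<^sup>2"
    using consensus_reachable[OF assms(1-5)] by blast
  have adm: "admissible N T \<alpha>" and ex: "\<exists>\<xi>. is_traj N T \<alpha> x0 \<xi>"
    using assms(6) unfolding optimal_control_def by simp_all
  have "cost N T \<xi> \<le> (xbar N x0 * exp (- T / real N))\<^sup>2" if "is_traj N T \<alpha> x0 \<xi>" for \<xi>
    using assms(6) that \<beta> \<eta> cost_\<eta> unfolding optimal_control_def by metis
  then have "(AE t in lebesgue_on {0..T}. (\<Sum>i=1..N. \<alpha> t i) = 1) \<and>
      (\<forall>i\<in>{1..N}. \<xi> T i = xbar N (\<xi> T))" if "is_traj N T \<alpha> x0 \<xi>" for \<xi>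
    using assms(1-3) adm that by (intro full_strength_and_consensus_if_cost_le_exp_decay) auto
  with ex show ?thesis by blast
qed

end
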